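(* Let $\mathcal S$ be a (possibly infinite) set of curves in $\mathbb C^2$, each of degree at most $d$, and suppose that $\bigcap_{C\in\mathcal S}C$ contains a set $I$ with $|I|>d^2$. Then there is a curve $C_0$ with $C_0\subset\bigcap_{C\in\mathcal S}C$ and $|C_0\cap I|\geq |I|-(d-1)^2$.
   Context: A curve in $\mathbb C^2$ is the zero set of a polynomial in $\mathbb C[x,y]\setminus\mathbb C$; its degree is the minimum degree of a defining polynomial. *)

theory Defs
  imports "HOL-Computational_Algebra.Polynomial"
begin

text \<open>Bivariate complex polynomials f(x,y) are represented as polynomials in y
whose coefficients are polynomials in x: type complex poly poly.\<close>

type_synonym bipoly = "complex poly poly"

definition bipoly_eval :: "bipoly \<Rightarrow> complex \<times> complex \<Rightarrow> complex" where
  "bipoly_eval p z = poly (map_poly (\<lambda>c. poly c (fst z)) p) (snd z)"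

definition total_degree :: "bipoly \<Rightarrow> nat" where
  "total_degree p = Max ({degree (coeff p j) + j | j. coeff p j \<noteq> 0} \<union> {0})"

definition zero_set :: "bipoly \<Rightarrow> (complex \<times> complex) set" where
  "zero_set p = {z. bipoly_eval p z = 0}"

definition is_curve :: "(complex \<times> complex) set \<Rightarrow> bool" where
  "is_curve C \<longleftrightarrow> (\<exists>p. total_degree p > 0 \<and> C = zero_set p)"

definition curve_degree :: "(complex \<times> complex) set \<Rightarrow> nat" where
  "curve_degree C = (LEAST n. \<exists>p. total_degree p > 0 \<and> C = zero_set p \<and> total_degree p = n)"

end

theory Submission
  imports Defs "HOL-Computational_Algebra.Polynomial_Factorial"
    "HOL-Computational_Algebra.Field_as_Ring"
begin

text \<open>Choose defining polynomials \<open>p\<^sub>C\<close> of degree \<open>\<le> d\<close> and a common divisor \<open>h\<close> of all of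
  them of maximal degree \<open>e\<close>; write \<open>p\<^sub>C = h g\<^sub>C\<close>. The points of \<open>I\<close> off the curve \<open>h = 0\<close> are
  common zeros of all \<open>g\<^sub>C\<close>. By maximality of \<open>h\<close>, every prime factor \<open>q\<close> of one \<open>g\<^sub>C\<close> fails to
  divide some other \<open>g\<^sub>C\<^sub>'\<close>, so by a weak B\'ezout bound (coprime \<open>f, g\<close> have at most
  \<open>deg f \<cdot> deg g\<close> common zeros) at most \<open>(d - e) deg q\<close> of these points lie on \<open>q = 0\<close>, hence at most
  \<open>(d - e)\<^sup>2 \<le> (d - 1)\<^sup>2\<close> in total. As \<open>|I| > d\<^sup>2\<close>, this forces \<open>e \<ge> 1\<close>, and \<open>h = 0\<close> is the curve.\<close>

lemma map_poly_add:
  assumes "f 0 = 0" "\<And>a b. f (a + b) = f a + f b"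
  shows "map_poly f (p + q) = map_poly f p + map_poly f q"
  by (intro poly_eqI) (simp add: coeff_map_poly assms)

lemma map_poly_mult:
  fixes f :: "'a::comm_semiring_1 \<Rightarrow> 'b::comm_semiring_1"
  assumes f0: "f 0 = 0" and f_add: "\<And>a b. f (a + b) = f a + f b"
    and f_mult: "\<And>a b. f (a * b) = f a * f b"
  shows "map_poly f (p * q) = map_poly f p * map_poly f q"
proof (induction p)
  case (pCons a p)
  have "map_poly f (pCons a p * q) = map_poly f (smult a q) + map_poly f (pCons 0 (p * q))"
    by (simp only: mult_pCons_left map_poly_add[of f, OF f0 f_add])
  also have "\<dots> = smult (f a) (map_poly f q) + pCons 0 (map_poly f p * map_poly f q)"
    using pCons by (simp add: map_poly_smult[of f, OF f0 f_mult] map_poly_pCons[of f, OF f0] f0)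
  also have "\<dots> = map_poly f (pCons a p) * map_poly f q"
    by (simp add: map_poly_pCons[of f, OF f0])
  finally show ?case .
qed simp

lemma bipoly_eval_add: "bipoly_eval (p + q) z = bipoly_eval p z + bipoly_eval q z"
  unfolding bipoly_eval_def by (subst map_poly_add) auto

lemma bipoly_eval_mult: "bipoly_eval (p * q) z = bipoly_eval p z * bipoly_eval q z"
  unfolding bipoly_eval_def by (subst map_poly_mult) auto

lemma bipoly_eval_0 [simp]: "bipoly_eval 0 z = 0"
  by (simp add: bipoly_eval_def)

lemma bipoly_eval_1 [simp]: "bipoly_eval 1 z = 1"
  by (simp add: bipoly_eval_def)

lemma bipoly_eval_smult: "bipoly_eval (smult [:c:] p) z = c * bipoly_eval p z"
  unfolding bipoly_eval_def by (subst map_poly_smult) auto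

lemma bipoly_eval_sum: "bipoly_eval (\<Sum>x\<in>A. f x) z = (\<Sum>x\<in>A. bipoly_eval (f x) z)"
  by (induction A rule: infinite_finite_induct) (auto simp: bipoly_eval_add)

lemma bipoly_eval_prod: "bipoly_eval (\<Prod>x\<in>A. f x) z = (\<Prod>x\<in>A. bipoly_eval (f x) z)"
  by (induction A rule: infinite_finite_induct) (auto simp: bipoly_eval_mult)

lemma bipoly_eval_x_minus [simp]: "bipoly_eval [:[:- a, 1:]:] z = fst z - a"
  by (simp add: bipoly_eval_def map_poly_pCons)

lemma bipoly_eval_y_minus [simp]: "bipoly_eval [:[:- b:], 1:] z = snd z - b"
  by (simp add: bipoly_eval_def map_poly_pCons)

lemma bipoly_eval_unit:
  assumes "is_unit p"
  shows "bipoly_eval p z \<noteq> 0"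
proof -
  obtain r where "1 = p * r"
    using assms by (rule dvdE)
  then have "bipoly_eval p z * bipoly_eval r z = 1"
    by (metis bipoly_eval_1 bipoly_eval_mult)
  then show ?thesis
    by auto
qed

text \<open>The substitution \<open>x \<mapsto> t, y \<mapsto> t s\<close> (outer variable \<open>t\<close>, inner variable \<open>s\<close>)
  sends \<open>x\<^sup>i y\<^sup>j\<close> to \<open>s\<^sup>j t\<^sup>i\<^sup>+\<^sup>j\<close>, so it turns the total degree into an ordinary degree.\<close>

definition tdeg_subst :: "bipoly \<Rightarrow> complex poly poly" where
  "tdeg_subst p = poly (map_poly (map_poly (\<lambda>a. [:a:])) p) (monom (monom 1 1) 1)"

lemma tdeg_subst_mult: "tdeg_subst (p * q) = tdeg_subst p * tdeg_subst q"
  unfolding tdeg_subst_def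
  by (subst map_poly_mult)
     (auto simp: map_poly_mult[of "\<lambda>a. [:a:]"] map_poly_add[of "\<lambda>a. [:a:]"])

lemma coeff_tdeg_subst:
  "coeff (coeff (tdeg_subst p) k) j = (if j \<le> k then coeff (coeff p j) (k - j) else 0)"
proof -
  have deg: "degree (map_poly (map_poly (\<lambda>a::complex. [:a:])) p) = degree p"
    by (rule degree_map_poly) (simp add: map_poly_eq_0_iff)
  have summand: "coeff (map_poly (map_poly (\<lambda>a. [:a:])) p) i * monom (monom 1 1) 1 ^ i =
      map_poly (\<lambda>a::complex. [:a:]) (coeff p i) * monom (monom 1 i) i" for i
    by (simp add: coeff_map_poly monom_power)
  have "tdeg_subst p = (\<Sum>i\<le>degree p. map_poly (\<lambda>a. [:a:]) (coeff p i) * monom (monom 1 i) i)"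
    by (simp only: tdeg_subst_def poly_altdef deg summand)
  then have "coeff (coeff (tdeg_subst p) k) j =
      (\<Sum>i\<le>degree p. if j = i \<and> i \<le> k then coeff (coeff p i) (k - i) else 0)"
    by (simp add: coeff_sum mult.commute[of _ "monom _ _"] coeff_monom_mult coeff_map_poly
        cong: if_cong)
       (intro sum.cong refl, auto)
  also have "\<dots> = (\<Sum>i\<le>degree p. if j = i then (if j \<le> k then coeff (coeff p j) (k - j) else 0) else 0)"
    by (intro sum.cong) auto
  also have "\<dots> = (if j \<le> k then coeff (coeff p j) (k - j) else 0)"
    by (simp add: coeff_eq_0)
  finally show ?thesis .
qed

lemma tdeg_subst_eq_0_iff [simp]: "tdeg_subst p = 0 \<longleftrightarrow> p = 0"
proof
  assume "tdeg_subst p = 0"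
  then have "coeff (coeff p j) i = 0" for i j
    using coeff_tdeg_subst[of p "i + j" j] by simp
  then show "p = 0"
    by (metis leading_coeff_0_iff)
qed (simp add: tdeg_subst_def)

lemma finite_total_degree_candidates:
  "finite ({degree (coeff p j) + j | j. coeff p j \<noteq> 0} \<union> {0})"
proof -
  have "{degree (coeff p j) + j | j. coeff p j \<noteq> 0} \<subseteq> (\<lambda>j. degree (coeff p j) + j) ` {..degree p}"
    using le_degree by fastforce
  then show ?thesis
    by (simp add: finite_subset)
qed

lemma le_total_degree:
  assumes "coeff (coeff p j) i \<noteq> 0"
  shows "i + j \<le> total_degree p"
proof -
  have "i + j \<le> degree (coeff p j) + j"
    using assms le_degree by simp
  moreover have "degree (coeff p j) + j \<in> {degree (coeff p j) + j | j. coeff p j \<noteq> 0} \<union> {0}"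
    using assms by auto
  ultimately show ?thesis
    unfolding total_degree_def using Max_ge[OF finite_total_degree_candidates] le_trans by blast
qed

lemma total_degree_le:
  assumes "\<And>i j. coeff (coeff p j) i \<noteq> 0 \<Longrightarrow> i + j \<le> k"
  shows "total_degree p \<le> k"
  unfolding total_degree_def
proof (subst Max_le_iff[OF finite_total_degree_candidates], blast, safe)
  fix j assume "coeff p j \<noteq> 0"
  then show "degree (coeff p j) + j \<le> k"
    using assms[of j "degree (coeff p j)"] by simp
qed

lemma total_degree_eq_degree_tdeg_subst: "total_degree p = degree (tdeg_subst p)"
proof (rule antisym)
  show "total_degree p \<le> degree (tdeg_subst p)"
  proof (rule total_degree_le)
    fix i j assume "coeff (coeff p j) i \<noteq> 0"
    then have "coeff (coeff (tdeg_subst p) (i + j)) j \<noteq> 0"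
      by (simp add: coeff_tdeg_subst)
    then show "i + j \<le> degree (tdeg_subst p)"
      by (metis coeff_0 le_degree)
  qed
  show "degree (tdeg_subst p) \<le> total_degree p"
  proof (rule degree_le, intro allI impI poly_eqI)
    fix k j assume "total_degree p < k"
    then show "coeff (coeff (tdeg_subst p) k) j = coeff 0 j"
      using le_total_degree[of p j "k - j"] by (force simp: coeff_tdeg_subst)
  qed
qed

lemma total_degree_mult:
  "p \<noteq> 0 \<Longrightarrow> q \<noteq> 0 \<Longrightarrow> total_degree (p * q) = total_degree p + total_degree q"
  by (simp add: total_degree_eq_degree_tdeg_subst tdeg_subst_mult degree_mult_eq)

lemma total_degree_mult_le: "total_degree (p * q) \<le> total_degree p + total_degree q"
  by (simp add: total_degree_eq_degree_tdeg_subst tdeg_subst_mult degree_mult_le)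

lemma total_degree_dvd_le:
  assumes "h dvd f" "f \<noteq> 0"
  shows "total_degree h \<le> total_degree f"
proof -
  obtain r where "f = h * r"
    using assms(1) by (rule dvdE)
  with assms(2) show ?thesis
    using total_degree_mult[of h r] by auto
qed

lemma total_degree_prod_le: "total_degree (\<Prod>x\<in>A. f x) \<le> (\<Sum>x\<in>A. total_degree (f x))"
proof (induction A rule: infinite_finite_induct)
  case (insert x F)
  then show ?case
    using total_degree_mult_le[of "f x" "prod f F"] by simp
qed (auto simp: total_degree_eq_degree_tdeg_subst tdeg_subst_def)

lemma total_degree_pos_imp_nonzero: "total_degree p > 0 \<Longrightarrow> p \<noteq> 0"
  by (auto simp: total_degree_def)

lemma total_degree_0_imp_unit:
  assumes "p \<noteq> 0" "total_degree p = 0"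
  shows "is_unit p"
proof -
  let ?c = "coeff (coeff p 0) 0"
  have "p = [:[:?c:]:]"
  proof (intro poly_eqI)
    fix i j show "coeff (coeff p j) i = coeff (coeff [:[:?c:]:] j) i"
      using le_total_degree[of p j i] assms(2)
      by (cases j; cases i) (auto simp: coeff_pCons split: nat.splits)
  qed
  with assms(1) show ?thesis
    by (metis is_unit_const_poly_iff is_unit_triv pCons_0_0)
qed

lemma prime_total_degree_pos: "prime q \<Longrightarrow> total_degree q > 0"
  using total_degree_0_imp_unit[of q] prime_imp_nonzero[of q] not_prime_unit[of q] by auto

text \<open>Exponents of the leading monomial for the order by total degree and then by degree
  in \<open>y\<close>; they are read off the leading coefficient of \<open>tdeg_subst\<close>, hence additive.\<close>

definition lead_exp_y :: "bipoly \<Rightarrow> nat" where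
  "lead_exp_y p = degree (lead_coeff (tdeg_subst p))"

definition lead_exp_x :: "bipoly \<Rightarrow> nat" where
  "lead_exp_x p = total_degree p - lead_exp_y p"

lemma
  assumes "p \<noteq> 0"
  shows lead_exp_y_le_total_degree: "lead_exp_y p \<le> total_degree p"
    and coeff_lead_exp_nonzero: "coeff (coeff p (lead_exp_y p)) (lead_exp_x p) \<noteq> 0"
proof -
  have "coeff (coeff (tdeg_subst p) (degree (tdeg_subst p))) (lead_exp_y p) \<noteq> 0"
    using assms unfolding lead_exp_y_def by simp
  then show "lead_exp_y p \<le> total_degree p" "coeff (coeff p (lead_exp_y p)) (lead_exp_x p) \<noteq> 0"
    unfolding lead_exp_x_def total_degree_eq_degree_tdeg_subst
    by (auto simp: coeff_tdeg_subst split: if_splits)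
qed

lemma
  assumes "p \<noteq> 0" "q \<noteq> 0"
  shows lead_exp_y_mult: "lead_exp_y (p * q) = lead_exp_y p + lead_exp_y q"
    and lead_exp_x_mult: "lead_exp_x (p * q) = lead_exp_x p + lead_exp_x q"
proof -
  show y: "lead_exp_y (p * q) = lead_exp_y p + lead_exp_y q"
    using assms unfolding lead_exp_y_def tdeg_subst_mult lead_coeff_mult
    by (simp add: degree_mult_eq)
  show "lead_exp_x (p * q) = lead_exp_x p + lead_exp_x q"
    using y total_degree_mult[OF assms] lead_exp_y_le_total_degree[OF assms(1)]
      lead_exp_y_le_total_degree[OF assms(2)]
    unfolding lead_exp_x_def by simp
qed

lemma lead_exp_dvd:
  assumes "f dvd b" "b \<noteq> 0"
  shows "lead_exp_x f \<le> lead_exp_x b" "lead_exp_y f \<le> lead_exp_y b"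
proof -
  obtain h where b: "b = f * h"
    using assms(1) by (rule dvdE)
  with assms(2) have "f \<noteq> 0" "h \<noteq> 0"
    by auto
  then show "lead_exp_x f \<le> lead_exp_x b" "lead_exp_y f \<le> lead_exp_y b"
    unfolding b by (simp_all add: lead_exp_x_mult lead_exp_y_mult)
qed

interpretation bipoly_vs: vector_space "\<lambda>c (p::bipoly). smult [:c:] p"
proof
  fix a b :: complex and x y :: bipoly
  show "smult [:a:] (x + y) = smult [:a:] x + smult [:a:] y"
    by (simp add: smult_add_right)
  show "smult [:a + b:] x = smult [:a:] x + smult [:b:] x"
    by (metis add_pCons add_0 smult_add_left)
  show "smult [:a:] (smult [:b:] x) = smult [:a * b:] x"
    by (simp add: mult.commute)
  show "smult [:1:] x = x"
    by (simp add: one_pCons[symmetric])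
qed

lemma independent_family_if_scalars_zero:
  assumes "finite J"
    and scalars_zero: "\<And>c. (\<Sum>x\<in>J. smult [:c x:] (\<phi> x)) = 0 \<Longrightarrow> \<forall>x\<in>J. c x = 0"
  shows "inj_on \<phi> J" "bipoly_vs.independent (\<phi> ` J)"
proof -
  show inj: "inj_on \<phi> J"
  proof (rule inj_onI, rule ccontr)
    fix x y assume xy: "x \<in> J" "y \<in> J" "\<phi> x = \<phi> y" "x \<noteq> y"
    let ?c = "\<lambda>u. if u = x then 1 else if u = y then -1 else (0::complex)"
    have "(\<Sum>u\<in>J. smult [:?c u:] (\<phi> u)) =
        (\<Sum>u\<in>J. (if u = x then \<phi> x else 0) + (if u = y then - \<phi> y else 0))"
      using xy by (intro sum.cong) auto
    also have "\<dots> = 0"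
      using xy \<open>finite J\<close> by (simp add: sum.distrib)
    finally show False
      using scalars_zero[of ?c] xy by auto
  qed
  show "bipoly_vs.independent (\<phi> ` J)"
  proof (rule bipoly_vs.independent_if_scalars_zero)
    fix f v assume "(\<Sum>x\<in>\<phi> ` J. smult [:f x:] x) = 0" "v \<in> \<phi> ` J"
    then show "f v = 0"
      using scalars_zero[of "f \<circ> \<phi>"] by (auto simp: sum.reindex[OF inj])
  qed (use \<open>finite J\<close> in simp)
qed

definition xy_monom :: "nat \<Rightarrow> nat \<Rightarrow> bipoly" where
  "xy_monom i j = monom (monom 1 i) j"

definition exps_upto :: "nat \<Rightarrow> (nat \<times> nat) set" where
  "exps_upto k = {(i, j). i + j \<le> k}"

lemma finite_exps_upto [simp]: "finite (exps_upto k)"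
  by (rule finite_subset[of _ "{..k} \<times> {..k}"]) (auto simp: exps_upto_def)

lemma total_degree_xy_monom: "total_degree (xy_monom i j) \<le> i + j"
  by (rule total_degree_le) (auto simp: xy_monom_def split: if_splits)

lemma coeff_xy_monom_combination:
  assumes "finite T"
  shows "coeff (coeff (\<Sum>(i, j)\<in>T. smult [:c (i, j):] (xy_monom i j)) j') i' =
    (if (i', j') \<in> T then c (i', j') else 0)"
proof -
  have "coeff (coeff (\<Sum>(i, j)\<in>T. smult [:c (i, j):] (xy_monom i j)) j') i' =
      (\<Sum>x\<in>T. if x = (i', j') then c (i', j') else 0)"
    by (simp add: coeff_sum case_prod_beta xy_monom_def)
       (intro sum.cong refl, auto)
  also have "\<dots> = (if (i', j') \<in> T then c (i', j') else 0)"
    using assms by simp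
  finally show ?thesis .
qed

lemma in_span_xy_monoms:
  assumes "total_degree p \<le> k"
  shows "p \<in> bipoly_vs.span ((\<lambda>(i, j). xy_monom i j) ` exps_upto k)"
proof -
  let ?c = "\<lambda>(i, j). coeff (coeff p j) i"
  have "p = (\<Sum>(i, j)\<in>exps_upto k. smult [:?c (i, j):] (xy_monom i j))"
  proof (intro poly_eqI)
    fix i j
    have "coeff (coeff p j) i = 0" if "(i, j) \<notin> exps_upto k"
      using le_total_degree[of p j i] assms that by (force simp: exps_upto_def)
    then show "coeff (coeff p j) i =
        coeff (coeff (\<Sum>(i, j)\<in>exps_upto k. smult [:?c (i, j):] (xy_monom i j)) j) i"
      by (subst coeff_xy_monom_combination) auto
  qed
  also have "\<dots> \<in> bipoly_vs.span ((\<lambda>(i, j). xy_monom i j) ` exps_upto k)"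
    by (intro bipoly_vs.span_sum)
       (auto split: prod.splits intro!: bipoly_vs.span_scale[OF bipoly_vs.span_base])
  finally show ?thesis .
qed

lemma card_independent_total_degree_le:
  assumes "bipoly_vs.independent V" "\<forall>p\<in>V. total_degree p \<le> k"
  shows "card V \<le> card (exps_upto k)"
proof -
  have "V \<subseteq> bipoly_vs.span ((\<lambda>(i, j). xy_monom i j) ` exps_upto k)"
    using assms(2) in_span_xy_monoms by blast
  then have "card V \<le> card ((\<lambda>(i, j). xy_monom i j) ` exps_upto k)"
    using bipoly_vs.independent_span_bound[OF _ assms(1)] by simp
  also have "\<dots> \<le> card (exps_upto k)"
    by (rule card_image_le) simp
  finally show ?thesis .
qed

lemma card_exps_upto: "2 * card (exps_upto k) = (k + 1) * (k + 2)"
proof (induction k)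
  case 0
  have "exps_upto 0 = {(0, 0)}"
    by (auto simp: exps_upto_def)
  then show ?case
    by simp
next
  case (Suc k)
  have split: "exps_upto (Suc k) = exps_upto k \<union> (\<lambda>i. (i, Suc k - i)) ` {..Suc k}"
    by (auto simp: exps_upto_def image_iff)
  have "card (exps_upto (Suc k)) = card (exps_upto k) + (Suc k + 1)"
    unfolding split
    by (subst card_Un_disjoint) (simp_all, auto simp: exps_upto_def card_image inj_on_def)
  then show ?case
    using Suc by (simp add: algebra_simps)
qed

lemma card_exps_upto_above:
  assumes "a + b = m" "m \<le> k"
  shows "card {x \<in> exps_upto k. a \<le> fst x \<and> b \<le> snd x} = card (exps_upto (k - m))"
proof -
  have "{x \<in> exps_upto k. a \<le> fst x \<and> b \<le> snd x} = (\<lambda>(i, j). (i + a, j + b)) ` exps_upto (k - m)"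
  proof (intro set_eqI iffI)
    fix x assume "x \<in> {x \<in> exps_upto k. a \<le> fst x \<and> b \<le> snd x}"
    then obtain i j where x: "x = (i, j)" "i + j \<le> k" "a \<le> i" "b \<le> j"
      by (auto simp: exps_upto_def)
    show "x \<in> (\<lambda>(i, j). (i + a, j + b)) ` exps_upto (k - m)"
      by (rule rev_image_eqI[of "(i - a, j - b)"]) (use x assms in \<open>auto simp: exps_upto_def\<close>)
  qed (use assms in \<open>auto simp: exps_upto_def\<close>)
  moreover have "inj_on (\<lambda>(i, j). (i + a, j + b)) (exps_upto (k - m))"
    by (auto simp: inj_on_def)
  ultimately show ?thesis
    by (simp add: card_image)
qed

lemma le_mult_if_card_exps_upto_le:
  assumes "N + card (exps_upto (N + n)) + card (exps_upto (N + m))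
      \<le> card (exps_upto (N + m + n)) + card (exps_upto N)"
  shows "N \<le> m * n"
proof -
  have "(N + m + n + 1) * (N + m + n + 2) + (N + 1) * (N + 2)
      = (N + n + 1) * (N + n + 2) + (N + m + 1) * (N + m + 2) + 2 * (m * n)"
    by (simp add: algebra_simps)
  then show ?thesis
    using assms card_exps_upto[of "N + n"] card_exps_upto[of "N + m"]
      card_exps_upto[of "N + m + n"] card_exps_upto[of N]
    by linarith
qed

definition separating_line :: "complex \<times> complex \<Rightarrow> complex \<times> complex \<Rightarrow> bipoly" where
  "separating_line z w = (if fst z \<noteq> fst w then [:[:- fst w, 1:]:] else [:[:- snd w:], 1:])"

definition lagrange_bipoly :: "(complex \<times> complex) set \<Rightarrow> complex \<times> complex \<Rightarrow> bipoly" where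
  "lagrange_bipoly P z = (\<Prod>w\<in>P - {z}. separating_line z w)"

lemma total_degree_lagrange_bipoly:
  assumes "finite P"
  shows "total_degree (lagrange_bipoly P z) \<le> card P"
proof -
  have line: "total_degree (separating_line z w) \<le> 1" for w
    unfolding separating_line_def
    by (rule total_degree_le) (auto simp: coeff_pCons split: nat.splits if_splits)
  have "total_degree (lagrange_bipoly P z) \<le> (\<Sum>w\<in>P - {z}. total_degree (separating_line z w))"
    unfolding lagrange_bipoly_def by (rule total_degree_prod_le)
  also have "\<dots> \<le> card (P - {z})"
    using sum_mono[of "P - {z}", OF line] by simp
  also have "\<dots> \<le> card P"
    using assms by (simp add: card_mono)
  finally show ?thesis .
qed

lemma bipoly_eval_separating_line:
  "bipoly_eval (separating_line z w) w = 0"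
  "z \<noteq> w \<Longrightarrow> bipoly_eval (separating_line z w) z \<noteq> 0"
  unfolding separating_line_def by (auto simp: prod_eq_iff)

lemma bipoly_eval_lagrange_bipoly_other:
  assumes "finite P" "w \<in> P" "w \<noteq> z"
  shows "bipoly_eval (lagrange_bipoly P z) w = 0"
  unfolding lagrange_bipoly_def bipoly_eval_prod
  using assms bipoly_eval_separating_line(1) by (intro prod_zero) blast+

lemma bipoly_eval_lagrange_bipoly_self:
  "finite P \<Longrightarrow> bipoly_eval (lagrange_bipoly P z) z \<noteq> 0"
  unfolding lagrange_bipoly_def bipoly_eval_prod
  by (metis (no_types, lifting) DiffE bipoly_eval_separating_line(2) insertI1 prod_zero_iff
      finite_Diff)

lemma lagrange_combination_eq_0:
  assumes "finite P"
    and "\<And>w. w \<in> P \<Longrightarrow> bipoly_eval (\<Sum>z\<in>P. smult [:c z:] (lagrange_bipoly P z)) w = 0"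
  shows "\<forall>w\<in>P. c w = 0"
proof
  fix w assume w: "w \<in> P"
  have "bipoly_eval (\<Sum>z\<in>P. smult [:c z:] (lagrange_bipoly P z)) w =
      (\<Sum>z\<in>P. if z = w then c w * bipoly_eval (lagrange_bipoly P w) w else 0)"
    unfolding bipoly_eval_sum bipoly_eval_smult
    using bipoly_eval_lagrange_bipoly_other[OF assms(1) w] by (intro sum.cong) auto
  also have "\<dots> = c w * bipoly_eval (lagrange_bipoly P w) w"
    using assms(1) w by simp
  finally show "c w = 0"
    using assms(2)[OF w] bipoly_eval_lagrange_bipoly_self[OF assms(1)] by simp
qed

lemma bezout_relation_trivial:
  assumes "f \<noteq> 0" "coprime f g" "finite P"
    and zeros: "\<And>z. z \<in> P \<Longrightarrow> bipoly_eval f z = 0 \<and> bipoly_eval g z = 0"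
    and relation: "(\<Sum>z\<in>P. smult [:c z:] (lagrange_bipoly P z)) + a * f + b * g = 0"
    and b_support: "\<And>i j. coeff (coeff b j) i \<noteq> 0 \<Longrightarrow> \<not> (lead_exp_x f \<le> i \<and> lead_exp_y f \<le> j)"
  shows "(\<forall>z\<in>P. c z = 0) \<and> a = 0 \<and> b = 0"
proof -
  let ?L = "\<Sum>z\<in>P. smult [:c z:] (lagrange_bipoly P z)"
  have "bipoly_eval ?L w = 0" if "w \<in> P" for w
    using arg_cong[OF relation, of "\<lambda>p. bipoly_eval p w"] zeros[OF that]
    by (simp add: bipoly_eval_add bipoly_eval_mult)
  then have c: "\<forall>z\<in>P. c z = 0"
    using lagrange_combination_eq_0[OF \<open>finite P\<close>] by blast
  then have "?L = 0"
    by simp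
  with relation have af: "a * f = - (b * g)"
    by (simp add: eq_neg_iff_add_eq_0)
  then have "f dvd b * g"
    by (metis dvd_minus_iff dvd_triv_right)
  then have "f dvd b"
    using coprime_dvd_mult_left_iff[OF \<open>coprime f g\<close>] by simp
  have b: "b = 0"
  proof (rule ccontr)
    assume "b \<noteq> 0"
    then show False
      using b_support[OF coeff_lead_exp_nonzero[OF \<open>b \<noteq> 0\<close>]] lead_exp_dvd[OF \<open>f dvd b\<close>] by simp
  qed
  then have "a = 0"
    using af \<open>f \<noteq> 0\<close> by simp
  with c b show ?thesis
    by blast
qed

definition bezout_family ::
    "(complex \<times> complex) set \<Rightarrow> bipoly \<Rightarrow> bipoly \<Rightarrow> (complex \<times> complex) + (nat \<times> nat) + (nat \<times> nat) \<Rightarrow> bipoly"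
  where "bezout_family P f g = case_sum (lagrange_bipoly P)
    (case_sum (\<lambda>(i, j). xy_monom i j * f) (\<lambda>(i, j). xy_monom i j * g))"

lemma total_degree_bezout_family:
  assumes "finite P" "x \<in> P <+> (exps_upto a <+> exps_upto b)"
  shows "total_degree (bezout_family P f g x)
    \<le> max (card P) (max (a + total_degree f) (b + total_degree g))"
proof -
  consider (lagrange) z where "x = Inl z"
    | (f_multiple) i j where "x = Inr (Inl (i, j))" "i + j \<le> a"
    | (g_multiple) i j where "x = Inr (Inr (i, j))" "i + j \<le> b"
    using assms(2) by (auto simp: exps_upto_def)
  then show ?thesis
  proof cases
    case lagrange
    then show ?thesis
      using total_degree_lagrange_bipoly[OF assms(1), of z] by (simp add: bezout_family_def)
  next
    case f_multiple
    have "total_degree (xy_monom i j * f) \<le> a + total_degree f"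
      using total_degree_mult_le[of "xy_monom i j" f] total_degree_xy_monom[of i j] f_multiple(2)
      by linarith
    then show ?thesis
      using f_multiple(1) by (simp add: bezout_family_def)
  next
    case g_multiple
    have "total_degree (xy_monom i j * g) \<le> b + total_degree g"
      using total_degree_mult_le[of "xy_monom i j" g] total_degree_xy_monom[of i j] g_multiple(2)
      by linarith
    then show ?thesis
      using g_multiple(1) by (simp add: bezout_family_def)
  qed
qed

text \<open>The multiples of \<open>g\<close> are restricted to monomials not divisible by the leading monomial
  of \<open>f\<close>, which rules out the syzygy \<open>g \<cdot> f - f \<cdot> g = 0\<close>.\<close>

lemma bezout_family_independent:
  assumes "f \<noteq> 0" "coprime f g" "finite P" "finite A" "finite B"
    and zeros: "\<And>z. z \<in> P \<Longrightarrow> bipoly_eval f z = 0 \<and> bipoly_eval g z = 0"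
    and B_avoids: "\<And>i j. (i, j) \<in> B \<Longrightarrow> \<not> (lead_exp_x f \<le> i \<and> lead_exp_y f \<le> j)"
  shows "inj_on (bezout_family P f g) (P <+> (A <+> B))"
    and "bipoly_vs.independent (bezout_family P f g ` (P <+> (A <+> B)))"
proof -
  have fin: "finite (P <+> (A <+> B))"
    using assms(3-5) by simp
  have scalars_zero: "\<forall>x\<in>P <+> (A <+> B). c x = 0"
    if "(\<Sum>x\<in>P <+> (A <+> B). smult [:c x:] (bezout_family P f g x)) = 0" for c
  proof -
    let ?a = "\<Sum>(i, j)\<in>A. smult [:c (Inr (Inl (i, j))):] (xy_monom i j)"
    let ?b = "\<Sum>(i, j)\<in>B. smult [:c (Inr (Inr (i, j))):] (xy_monom i j)"
    have decomposition: "(\<Sum>x\<in>P <+> (A <+> B). smult [:c x:] (bezout_family P f g x)) =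
        (\<Sum>z\<in>P. smult [:c (Inl z):] (lagrange_bipoly P z)) + ?a * f + ?b * g"
      using assms(3-5)
      by (simp add: sum.Plus bezout_family_def sum_distrib_right case_prod_beta add.assoc)
    have b_support: "\<not> (lead_exp_x f \<le> i \<and> lead_exp_y f \<le> j)" if "coeff (coeff ?b j) i \<noteq> 0" for i j
      using that B_avoids coeff_xy_monom_combination[OF \<open>finite B\<close>, of "\<lambda>x. c (Inr (Inr x))"]
      by (auto split: if_splits)
    have "(\<forall>z\<in>P. c (Inl z) = 0) \<and> ?a = 0 \<and> ?b = 0"
      using that unfolding decomposition
      by (intro bezout_relation_trivial[OF \<open>f \<noteq> 0\<close> \<open>coprime f g\<close> \<open>finite P\<close> zeros _ b_support])
    moreover have "c (Inr (Inl (i, j))) = 0" if "?a = 0" "(i, j) \<in> A" for i j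
      using arg_cong[OF that(1), of "\<lambda>p. coeff (coeff p j) i"] that(2)
      unfolding coeff_xy_monom_combination[OF \<open>finite A\<close>, of "\<lambda>x. c (Inr (Inl x))"] by simp
    moreover have "c (Inr (Inr (i, j))) = 0" if "?b = 0" "(i, j) \<in> B" for i j
      using arg_cong[OF that(1), of "\<lambda>p. coeff (coeff p j) i"] that(2)
      unfolding coeff_xy_monom_combination[OF \<open>finite B\<close>, of "\<lambda>x. c (Inr (Inr x))"] by simp
    ultimately show ?thesis
      by auto
  qed
  show "inj_on (bezout_family P f g) (P <+> (A <+> B))"
    by (rule independent_family_if_scalars_zero(1)[OF fin scalars_zero])
  show "bipoly_vs.independent (bezout_family P f g ` (P <+> (A <+> B)))"
    by (rule independent_family_if_scalars_zero(2)[OF fin scalars_zero])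
qed

text \<open>Weak B\'ezout by a dimension count: if \<open>N = |P| > deg f \<cdot> deg g\<close>, the independent
  \<open>bezout_family\<close> has more members of degree \<open>\<le> N + deg f + deg g\<close> than there are monomials of that degree.\<close>

lemma coprime_common_zeros_card_le:
  assumes "f \<noteq> 0" "g \<noteq> 0" "coprime f g" "finite P"
    and zeros: "\<And>z. z \<in> P \<Longrightarrow> bipoly_eval f z = 0 \<and> bipoly_eval g z = 0"
  shows "card P \<le> total_degree f * total_degree g"
proof -
  define N where "N = card P"
  define m where "m = total_degree f"
  define n where "n = total_degree g"
  define D where "D = {x. lead_exp_x f \<le> fst x \<and> lead_exp_y f \<le> snd x}"
  define B where "B = exps_upto (N + m) - D"
  let ?J = "P <+> (exps_upto (N + n) <+> B)"
  have "finite B"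
    by (simp add: B_def)
  have B_avoids: "\<not> (lead_exp_x f \<le> i \<and> lead_exp_y f \<le> j)" if "(i, j) \<in> B" for i j
    using that by (simp add: B_def D_def)
  have inj: "inj_on (bezout_family P f g) ?J"
    and indep: "bipoly_vs.independent (bezout_family P f g ` ?J)"
    using bezout_family_independent[OF assms(1,3,4) finite_exps_upto \<open>finite B\<close> zeros B_avoids]
    by blast+
  have "total_degree (bezout_family P f g x) \<le> N + m + n" if "x \<in> ?J" for x
  proof -
    have "x \<in> P <+> (exps_upto (N + n) <+> exps_upto (N + m))"
      using that by (auto simp: B_def)
    from total_degree_bezout_family[OF \<open>finite P\<close> this, of f g] show ?thesis
      by (simp add: N_def m_def n_def)
  qed
  then have "card ?J \<le> card (exps_upto (N + m + n))"
    using card_independent_total_degree_le[OF indep] card_image[OF inj] by auto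
  moreover have "card ?J = N + card (exps_upto (N + n)) + card B"
    using \<open>finite P\<close> \<open>finite B\<close> by (simp add: card_Plus N_def)
  moreover have "card B = card (exps_upto (N + m)) - card (exps_upto N)"
  proof -
    have "lead_exp_x f + lead_exp_y f = m"
      using lead_exp_y_le_total_degree[OF \<open>f \<noteq> 0\<close>] by (simp add: lead_exp_x_def m_def)
    then have "card (exps_upto (N + m) \<inter> D) = card (exps_upto N)"
      using card_exps_upto_above[of "lead_exp_x f" "lead_exp_y f" m "N + m"]
      by (simp add: D_def Int_def)
    then show ?thesis
      by (simp add: B_def card_Diff_subset_Int)
  qed
  moreover have "card (exps_upto N) \<le> card (exps_upto (N + m))"
    by (rule card_mono) (simp, auto simp: exps_upto_def)
  ultimately have "N + card (exps_upto (N + n)) + card (exps_upto (N + m))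
      \<le> card (exps_upto (N + m + n)) + card (exps_upto N)"
    by linarith
  then show ?thesis
    unfolding N_def m_def n_def by (rule le_mult_if_card_exps_upto_le)
qed

lemma card_zeros_mult_le:
  assumes "finite P" "\<And>z. z \<in> P \<Longrightarrow> bipoly_eval (p * q) z = 0"
  shows "card P \<le> card {z \<in> P. bipoly_eval p z = 0} + card {z \<in> P. bipoly_eval q z = 0}"
proof -
  have "card P \<le> card ({z \<in> P. bipoly_eval p z = 0} \<union> {z \<in> P. bipoly_eval q z = 0})"
    using assms by (intro card_mono) (auto simp: bipoly_eval_mult)
  also have "\<dots> \<le> card {z \<in> P. bipoly_eval p z = 0} + card {z \<in> P. bipoly_eval q z = 0}"
    by (rule card_Un_le)
  finally show ?thesis .
qed

text \<open>Induction over the prime factors \<open>q\<close> of \<open>g\<^sub>0\<close>: the common zeros on \<open>q = 0\<close> are at most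
  \<open>deg q \<cdot> k\<close> by weak B\'ezout against a \<open>g \<in> G\<close> not divisible by \<open>q\<close>.\<close>

lemma common_zeros_card_le:
  assumes "g\<^sub>0 \<noteq> 0"
    and "\<And>q. prime q \<Longrightarrow> q dvd g\<^sub>0 \<Longrightarrow> \<exists>g\<in>G. g \<noteq> 0 \<and> \<not> q dvd g \<and> total_degree g \<le> k"
    and "finite P"
    and "\<And>z. z \<in> P \<Longrightarrow> bipoly_eval g\<^sub>0 z = 0 \<and> (\<forall>g\<in>G. bipoly_eval g z = 0)"
  shows "card P \<le> k * total_degree g\<^sub>0"
  using assms
proof (induction "total_degree g\<^sub>0" arbitrary: g\<^sub>0 P rule: less_induct)
  case less
  show ?case
  proof (cases "is_unit g\<^sub>0")
    case True
    then show ?thesis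
      using less.prems(4) bipoly_eval_unit by fastforce
  next
    case False
    obtain q where q: "q dvd g\<^sub>0" "prime q"
      using prime_divisor_exists[OF less.prems(1) False] by blast
    obtain r where r: "g\<^sub>0 = q * r"
      using q(1) by (rule dvdE)
    have "q \<noteq> 0" "r \<noteq> 0"
      using r less.prems(1) by auto
    then have deg: "total_degree g\<^sub>0 = total_degree q + total_degree r"
      using r total_degree_mult by simp
    obtain g where g: "g \<in> G" "g \<noteq> 0" "\<not> q dvd g" "total_degree g \<le> k"
      using less.prems(2)[OF q(2,1)] by blast
    have "card P \<le> card {z \<in> P. bipoly_eval q z = 0} + card {z \<in> P. bipoly_eval r z = 0}"
      using card_zeros_mult_le less.prems(3,4) r by blast
    also have "card {z \<in> P. bipoly_eval q z = 0} \<le> total_degree q * total_degree g"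
      using less.prems(3,4) g(1)
      by (intro coprime_common_zeros_card_le[OF \<open>q \<noteq> 0\<close> g(2) prime_imp_coprime[OF q(2) g(3)]])
         auto
    also have "\<dots> \<le> k * total_degree q"
      using g(4) by (simp add: mult.commute)
    also have "card {z \<in> P. bipoly_eval r z = 0} \<le> k * total_degree r"
    proof (rule less.hyps)
      show "total_degree r < total_degree g\<^sub>0"
        using deg prime_total_degree_pos[OF q(2)] by simp
      show "\<exists>g\<in>G. g \<noteq> 0 \<and> \<not> q' dvd g \<and> total_degree g \<le> k" if "prime q'" "q' dvd r" for q'
        using less.prems(2) that r by auto
    qed (use \<open>r \<noteq> 0\<close> less.prems(3,4) in auto)
    finally show ?thesis
      using deg by (simp add: algebra_simps)
  qed
qed

lemma exists_max_degree_common_divisor: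
  fixes F :: "bipoly set"
  assumes "F \<noteq> {}" "0 \<notin> F"
  obtains h where "\<forall>f\<in>F. h dvd f"
    and "\<And>h'. \<forall>f\<in>F. h' dvd f \<Longrightarrow> total_degree h' \<le> total_degree h"
proof -
  obtain f\<^sub>1 where "f\<^sub>1 \<in> F"
    using assms(1) by blast
  then have "total_degree h' < total_degree f\<^sub>1 + 1" if "\<forall>f\<in>F. h' dvd f" for h'
  proof -
    have "h' dvd f\<^sub>1" "f\<^sub>1 \<noteq> 0"
      using that \<open>f\<^sub>1 \<in> F\<close> assms(2) by auto
    then show ?thesis
      using total_degree_dvd_le by (simp add: less_Suc_eq_le)
  qed
  moreover have "\<forall>f\<in>F. 1 dvd f"
    by simp
  ultimately show ?thesis
    using ex_has_greatest_nat[of "\<lambda>h. \<forall>f\<in>F. h dvd f" 1 total_degree] that by blast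
qed

lemma max_common_divisor_cofactors_coprime:
  fixes F :: "bipoly set" and q :: bipoly
  assumes h_dvd: "\<forall>f\<in>F. h dvd f"
    and h_max: "\<And>h'. \<forall>f\<in>F. h' dvd f \<Longrightarrow> total_degree h' \<le> total_degree h"
    and "h \<noteq> 0" "prime q"
  shows "\<exists>f\<in>F. \<not> q dvd f div h"
proof (rule ccontr)
  assume "\<not> ?thesis"
  then have "q * h dvd f" if "f \<in> F" for f
    using mult_dvd_mono[of q "f div h" h h] h_dvd that by (auto simp: mult.commute)
  then have "total_degree (q * h) \<le> total_degree h"
    by (intro h_max) blast
  moreover have "q \<noteq> 0"
    using \<open>prime q\<close> by auto
  ultimately show False
    using total_degree_mult[OF _ \<open>h \<noteq> 0\<close>, of q] prime_total_degree_pos[OF \<open>prime q\<close>] by simp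
qed

lemma common_zeros_off_max_divisor_card_le:
  fixes F :: "bipoly set"
  assumes "f\<^sub>1 \<in> F" "0 \<notin> F" "\<forall>f\<in>F. total_degree f \<le> d"
    and h_dvd: "\<forall>f\<in>F. h dvd f"
    and h_max: "\<And>h'. \<forall>f\<in>F. h' dvd f \<Longrightarrow> total_degree h' \<le> total_degree h"
    and "finite P"
    and zeros: "\<And>z f. z \<in> P \<Longrightarrow> f \<in> F \<Longrightarrow> bipoly_eval f z = 0"
    and off_h: "\<And>z. z \<in> P \<Longrightarrow> bipoly_eval h z \<noteq> 0"
  shows "card P \<le> (d - total_degree h) ^ 2"
proof -
  have f_eq: "h * (f div h) = f" if "f \<in> F" for f
    using h_dvd that by simp
  have "h \<noteq> 0"
    using assms(1,2) h_dvd by auto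
  have cof_nonzero: "f div h \<noteq> 0" if "f \<in> F" for f
    using f_eq[OF that] assms(2) that by (metis mult_zero_right)
  have cof_degree: "total_degree (f div h) \<le> d - total_degree h" if "f \<in> F" for f
    using total_degree_mult[OF \<open>h \<noteq> 0\<close> cof_nonzero[OF that]] f_eq[OF that] assms(3) that
    by auto
  have "card P \<le> (d - total_degree h) * total_degree (f\<^sub>1 div h)"
  proof (rule common_zeros_card_le[where G = "(\<lambda>f. f div h) ` F"])
    fix q :: bipoly assume "prime q"
    then obtain f where "f \<in> F" "\<not> q dvd f div h"
      using max_common_divisor_cofactors_coprime[OF h_dvd h_max \<open>h \<noteq> 0\<close>] by blast
    then show "\<exists>g\<in>(\<lambda>f. f div h) ` F. g \<noteq> 0 \<and> \<not> q dvd g \<and> total_degree g \<le> d - total_degree h"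
      using cof_nonzero cof_degree by blast
  next
    fix z assume z: "z \<in> P"
    have "bipoly_eval (f div h) z = 0" if "f \<in> F" for f
      using zeros[OF z that] off_h[OF z] bipoly_eval_mult[of h "f div h" z] f_eq[OF that] by simp
    then show "bipoly_eval (f\<^sub>1 div h) z = 0 \<and> (\<forall>g\<in>(\<lambda>f. f div h) ` F. bipoly_eval g z = 0)"
      using assms(1) by blast
  qed (use cof_nonzero[OF assms(1)] \<open>finite P\<close> in auto)
  also have "\<dots> \<le> (d - total_degree h) ^ 2"
    using cof_degree[OF assms(1)] by (simp add: power2_eq_square)
  finally show ?thesis .
qed

lemma exists_common_divisor_zeros_off_card_le:
  fixes F :: "bipoly set"
  assumes "F \<noteq> {}" "0 \<notin> F" "\<forall>f\<in>F. total_degree f \<le> d" "finite I"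
    and zeros: "\<And>z f. z \<in> I \<Longrightarrow> f \<in> F \<Longrightarrow> bipoly_eval f z = 0"
  obtains h where "h \<noteq> 0" "\<forall>f\<in>F. h dvd f" "total_degree h \<le> d"
    "card (I - zero_set h) \<le> (d - total_degree h) ^ 2"
proof -
  obtain h where h_dvd: "\<forall>f\<in>F. h dvd f"
    and h_max: "\<And>h'. \<forall>f\<in>F. h' dvd f \<Longrightarrow> total_degree h' \<le> total_degree h"
    using exists_max_degree_common_divisor[OF assms(1,2)] by blast
  obtain f\<^sub>1 where f\<^sub>1: "f\<^sub>1 \<in> F"
    using assms(1) by blast
  have "h \<noteq> 0"
    using f\<^sub>1 assms(2) h_dvd by auto
  moreover have "total_degree h \<le> d"
    using total_degree_dvd_le[of h f\<^sub>1] f\<^sub>1 assms(2,3) h_dvd by fastforce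
  moreover have "card (I - zero_set h) \<le> (d - total_degree h) ^ 2"
    using assms(4) zeros
    by (intro common_zeros_off_max_divisor_card_le[OF f\<^sub>1 assms(2,3) h_dvd h_max])
       (auto simp: zero_set_def)
  ultimately show ?thesis
    using that h_dvd by blast
qed

lemma zero_set_subset_if_dvd: "h dvd f \<Longrightarrow> zero_set h \<subseteq> zero_set f"
  by (auto simp: zero_set_def bipoly_eval_mult)

lemma zero_set_eq_empty_if_total_degree_0:
  "p \<noteq> 0 \<Longrightarrow> total_degree p = 0 \<Longrightarrow> zero_set p = {}"
  using total_degree_0_imp_unit bipoly_eval_unit by (auto simp: zero_set_def)

lemma finite_set_on_curve:
  assumes "finite I" "I \<noteq> {}"
  shows "\<exists>p. total_degree p > 0 \<and> I \<subseteq> zero_set p"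
proof -
  define q where "q = (\<Prod>z\<in>I. [:- fst z, 1:])"
  have eval: "bipoly_eval [:q:] z = poly q (fst z)" for z
    by (simp add: bipoly_eval_def map_poly_pCons)
  have "q \<noteq> 0"
    unfolding q_def using assms(1) by simp
  have root: "poly q (fst z) = 0" if "z \<in> I" for z
    unfolding q_def poly_prod using assms(1) that by (intro prod_zero) auto
  have "degree q \<noteq> 0"
  proof
    assume "degree q = 0"
    then obtain c where "q = [:c:]"
      by (rule degree_eq_zeroE)
    with root \<open>q \<noteq> 0\<close> assms(2) show False
      by auto
  qed
  moreover have "degree q + 0 \<le> total_degree [:q:]"
    using \<open>q \<noteq> 0\<close> by (intro le_total_degree) simp
  ultimately show ?thesis
    using root by (intro exI[of _ "[:q:]"]) (auto simp: zero_set_def eval)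
qed

lemma curve_defining_poly:
  assumes "is_curve C"
  shows "\<exists>p. total_degree p > 0 \<and> zero_set p = C \<and> total_degree p = curve_degree C"
proof -
  have "\<exists>n p. total_degree p > 0 \<and> C = zero_set p \<and> total_degree p = n"
    using assms unfolding is_curve_def by blast
  from LeastI_ex[OF this] show ?thesis
    unfolding curve_degree_def by metis
qed

lemma exists_defining_polys:
  assumes "\<forall>C\<in>\<S>. is_curve C \<and> curve_degree C \<le> d"
  obtains pc where "\<And>C. C \<in> \<S> \<Longrightarrow>
    total_degree (pc C) > 0 \<and> zero_set (pc C) = C \<and> total_degree (pc C) \<le> d"
proof -
  have "\<exists>p. total_degree p > 0 \<and> zero_set p = C \<and> total_degree p \<le> d" if "C \<in> \<S>" for C
    using curve_defining_poly[of C] assms that by force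
  then show ?thesis
    using that by metis
qed

lemma int_card_inter_ge:
  assumes "finite I" "card (I - C) \<le> (d - e) ^ 2" "1 \<le> e" "e \<le> d"
  shows "int (card (C \<inter> I)) \<ge> int (card I) - (int d - 1) ^ 2"
proof -
  have "int (card I) = int (card (C \<inter> I)) + int (card (I - C))"
    using card_Int_Diff[OF assms(1), of C] by (simp add: Int_commute)
  moreover have "int (card (I - C)) \<le> int ((d - e) ^ 2)"
    using assms(2) by linarith
  moreover have "int ((d - e) ^ 2) = (int d - int e) ^ 2"
    using assms(4) by simp
  moreover have "(int d - int e) ^ 2 \<le> (int d - 1) ^ 2"
    using assms(3,4) by (intro power_mono) auto
  ultimately show ?thesis
    by linarith
qed

theorem lemma2p3:
  fixes \<S> :: "(complex \<times> complex) set set" and d :: nat and I :: "(complex \<times> complex) set"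
  assumes "\<forall>C\<in>\<S>. is_curve C \<and> curve_degree C \<le> d"
    and "I \<subseteq> \<Inter>\<S>"
    and "finite I"
    and "card I > d ^ 2"
  shows "\<exists>C0. is_curve C0 \<and> C0 \<subseteq> \<Inter>\<S> \<and>
           int (card (C0 \<inter> I)) \<ge> int (card I) - (int d - 1) ^ 2"
proof (cases "\<S> = {}")
  case True
  obtain p where "total_degree p > 0" "I \<subseteq> zero_set p"
    using finite_set_on_curve[OF assms(3)] assms(4) by fastforce
  with True show ?thesis
    unfolding is_curve_def by (intro exI[of _ "zero_set p"]) (auto simp: Int_absorb1)
next
  case False
  obtain pc where pc: "\<And>C. C \<in> \<S> \<Longrightarrow>
      total_degree (pc C) > 0 \<and> zero_set (pc C) = C \<and> total_degree (pc C) \<le> d"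
    using exists_defining_polys[OF assms(1)] by blast
  then have F: "pc ` \<S> \<noteq> {}" "0 \<notin> pc ` \<S>" "\<forall>f\<in>pc ` \<S>. total_degree f \<le> d"
    using False total_degree_pos_imp_nonzero by auto
  have zeros: "bipoly_eval f z = 0" if "z \<in> I" "f \<in> pc ` \<S>" for z f
    using that pc assms(2) by (auto simp: zero_set_def)
  obtain h where "h \<noteq> 0" and h_dvd: "\<forall>f\<in>pc ` \<S>. h dvd f" and "total_degree h \<le> d"
    and off_h: "card (I - zero_set h) \<le> (d - total_degree h) ^ 2"
    by (rule exists_common_divisor_zeros_off_card_le[OF F assms(3) zeros])
  have "total_degree h \<noteq> 0"
  proof
    assume "total_degree h = 0"
    with zero_set_eq_empty_if_total_degree_0[OF \<open>h \<noteq> 0\<close>] off_h assms(4) show False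
      by simp
  qed
  moreover have "zero_set h \<subseteq> \<Inter>\<S>"
    using h_dvd pc zero_set_subset_if_dvd by blast
  ultimately show ?thesis
    using int_card_inter_ge[OF assms(3) off_h] \<open>total_degree h \<le> d\<close>
    unfolding is_curve_def by (intro exI[of _ "zero_set h"]) auto
qed

end
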